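(* Let $\mathcal{X}\subseteq\mathbb{R}^N$ and let $K_k(\mathbf{x},\mathbf{y})=(\mathbf{x}^\top\mathbf{y}+1)^k$ be the polynomial kernel of degree $k$ on $\mathcal{X}$. Let $\kappa_k=\sup_{x\in\mathcal{X}}\sqrt{K_k(x,x)}$, let $H_k=\{x\mapsto \pm K_k(x,x') : x'\in\mathcal{X}\}$, and let $d_k=\binom{N+k}{k}$ be the dimension of the feature space of $K_k$. Then for any sample $S=(x_1,\dots,x_m)$ of points of $\mathcal{X}$, \[ \widehat{\mathfrak{R}}_S(H_k)\le 12\,\kappa_k^2\sqrt{\frac{\pi d_k}{m}}. \]
   Context: For a set $H$ of real-valued functions on $\mathcal{X}$, the empirical Rademacher complexity on $S$ is $\widehat{\mathfrak{R}}_S(H)=\frac1m\mathbb{E}_\sigma\big[\sup_{h\in H}\sum_{i=1}^m\sigma_ih(x_i)\big]$, where $\sigma_1,\dots,\sigma_m$ are independent random variables uniformly distributed on $\{-1,+1\}$. *)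

theory Defs
  imports "HOL-Analysis.Analysis"
begin

definition poly_kernel :: "nat \<Rightarrow> real^'n \<Rightarrow> real^'n \<Rightarrow> real" where
  "poly_kernel k x y = (x \<bullet> y + 1) ^ k"

definition kernel_class :: "nat \<Rightarrow> (real^'n) set \<Rightarrow> (real^'n \<Rightarrow> real) set" where
  "kernel_class k X = {h. \<exists>x'\<in>X. \<exists>s\<in>{-1, 1::real}. h = (\<lambda>x. s * poly_kernel k x x')}"

definition kernel_kappa :: "nat \<Rightarrow> (real^'n) set \<Rightarrow> real" where
  "kernel_kappa k X = (SUP x\<in>X. sqrt (poly_kernel k x x))"

definition sign_vectors :: "nat \<Rightarrow> real list set" where
  "sign_vectors m = {\<sigma>. length \<sigma> = m \<and> set \<sigma> \<subseteq> {-1, 1}}"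

definition emp_rademacher :: "('a \<Rightarrow> real) set \<Rightarrow> 'a list \<Rightarrow> real" where
  "emp_rademacher H xs =
     (let m = length xs in
      (1 / real m) *
      ((\<Sum>\<sigma>\<in>sign_vectors m. (SUP h\<in>H. \<Sum>i<m. \<sigma> ! i * h (xs ! i)))
         / real (card (sign_vectors m))))"

end

theory Submission
  imports Defs
begin

text \<open>The polynomial kernel has a finite feature map \<open>\<phi>\<close>. For \<open>h = \<plusminus>K(\<cdot>, x')\<close>,
  Cauchy-Schwarz in feature space gives \<open>\<Sum>\<^sub>i \<sigma>\<^sub>i h(x\<^sub>i) \<le> \<kappa> \<parallel>\<Sum>\<^sub>i \<sigma>\<^sub>i \<phi>(x\<^sub>i)\<parallel>\<close>.
  Cauchy-Schwarz over the signs together with \<open>E \<sigma>\<^sub>i \<sigma>\<^sub>j = \<delta>\<^sub>i\<^sub>j\<close> bounds the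
  average of this norm by \<open>sqrt (\<Sum>\<^sub>i K(x\<^sub>i, x\<^sub>i)) \<le> \<kappa> sqrt m\<close>. Hence the complexity
  is at most \<open>\<kappa>\<^sup>2 / sqrt m\<close>, which is below the stated bound since \<open>\<pi> d\<^sub>k \<ge> 1\<close>.\<close>

definition hom_coord :: "real^'n \<Rightarrow> 'n option \<Rightarrow> real" where
  "hom_coord x z = (case z of None \<Rightarrow> 1 | Some i \<Rightarrow> x $ i)"

text \<open>Features are indexed by all words of length \<open>k\<close> over the \<open>N + 1\<close>
  homogeneous coordinates, i.e. \<open>(N + 1)\<^sup>k\<close> of them rather than \<open>d\<^sub>k\<close>; the
  argument does not depend on the dimension of the feature space.\<close>
definition poly_feature_index :: "nat \<Rightarrow> (nat \<Rightarrow> 'n option) set" where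
  "poly_feature_index k = PiE {..<k} (\<lambda>_. UNIV)"

definition poly_feature :: "nat \<Rightarrow> real^'n \<Rightarrow> (nat \<Rightarrow> 'n option) \<Rightarrow> real" where
  "poly_feature k x f = (\<Prod>j<k. hom_coord x (f j))"

lemma inner_plus_one_eq_sum_hom_coord:
  "x \<bullet> y + 1 = (\<Sum>z\<in>UNIV. hom_coord x z * hom_coord y (z :: 'n::finite option))"
proof -
  have UNIV_option: "(UNIV :: 'n option set) = insert None (range Some)"
    by (auto intro: option.exhaust)
  have "(\<Sum>z\<in>UNIV. hom_coord x z * hom_coord y (z :: 'n option))
      = 1 + (\<Sum>i\<in>UNIV. x $ i * y $ i)"
    unfolding UNIV_option by (simp add: sum.reindex hom_coord_def)
  then show ?thesis
    by (simp add: inner_vec_def)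
qed

lemma poly_kernel_eq_sum_poly_feature:
  "poly_kernel k x y = (\<Sum>f\<in>poly_feature_index k. poly_feature k x f * poly_feature k y f)"
proof -
  have "poly_kernel k x y = (\<Prod>j<k. \<Sum>z\<in>UNIV. hom_coord x z * hom_coord y z)"
    unfolding poly_kernel_def inner_plus_one_eq_sum_hom_coord by simp
  also have "\<dots> = (\<Sum>f\<in>poly_feature_index k. \<Prod>j<k. hom_coord x (f j) * hom_coord y (f j))"
    unfolding poly_feature_index_def by (rule prod_sum_PiE) auto
  finally show ?thesis
    by (simp add: poly_feature_def prod.distrib)
qed

lemma L2_set_poly_feature:
  "L2_set (poly_feature k x) (poly_feature_index k) = sqrt (poly_kernel k x x)"
  by (simp add: L2_set_def poly_kernel_eq_sum_poly_feature power2_eq_square)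

lemma poly_kernel_self: "poly_kernel k x x = ((norm x)\<^sup>2 + 1) ^ k"
  by (simp add: poly_kernel_def power2_norm_eq_inner)

lemma poly_kernel_self_nonneg: "0 \<le> poly_kernel k x x"
  by (simp add: poly_kernel_self)

lemma sqrt_poly_kernel_le_kernel_kappa:
  assumes "bounded X" and "x \<in> X"
  shows "sqrt (poly_kernel k x x) \<le> kernel_kappa k X"
proof -
  obtain B where B: "\<And>x. x \<in> X \<Longrightarrow> norm x \<le> B"
    using assms(1) by (auto simp: bounded_iff)
  have "bdd_above ((\<lambda>x. sqrt (poly_kernel k x x)) ` X)"
  proof (rule bdd_aboveI2)
    fix x assume "x \<in> X"
    then have "poly_kernel k x x \<le> (B\<^sup>2 + 1) ^ k"
      unfolding poly_kernel_self using B by (intro power_mono) (auto intro: power_mono)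
    then show "sqrt (poly_kernel k x x) \<le> sqrt ((B\<^sup>2 + 1) ^ k)"
      by (rule real_sqrt_le_mono)
  qed
  then show ?thesis
    unfolding kernel_kappa_def by (rule cSUP_upper[OF assms(2)])
qed

lemma sign_vectors_Suc:
  "sign_vectors (Suc m) = (\<lambda>(s, \<sigma>). s # \<sigma>) ` ({-1, 1} \<times> sign_vectors m)"
  by (auto simp: sign_vectors_def length_Suc_conv image_iff)

lemma sign_vectors_0: "sign_vectors 0 = {[]}"
  by (auto simp: sign_vectors_def)

lemma card_sign_vectors: "card (sign_vectors m) = 2 ^ m"
proof (induction m)
  case (Suc m)
  have "card (sign_vectors (Suc m)) = card ({-1, 1 :: real} \<times> sign_vectors m)"
    unfolding sign_vectors_Suc by (rule card_image) (auto simp: inj_on_def)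
  with Suc show ?case
    by (simp add: card_cartesian_product)
qed (simp add: sign_vectors_0)

lemma sum_sign_vectors_square:
  "(\<Sum>\<sigma>\<in>sign_vectors m. (\<Sum>i<m. \<sigma> ! i * a i)\<^sup>2)
     = real (card (sign_vectors m)) * (\<Sum>i<m. (a i)\<^sup>2)"
proof (induction m arbitrary: a)
  case 0
  show ?case by (simp add: sign_vectors_0)
next
  case (Suc m)
  define T where "T \<sigma> = (\<Sum>i<m. \<sigma> ! i * a (Suc i))" for \<sigma> :: "real list"
  have "inj_on (\<lambda>(s, \<sigma>). s # \<sigma>) ({-1, 1 :: real} \<times> sign_vectors m)"
    by (auto simp: inj_on_def)
  then have "(\<Sum>\<sigma>\<in>sign_vectors (Suc m). (\<Sum>i<Suc m. \<sigma> ! i * a i)\<^sup>2)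
      = (\<Sum>(s, \<sigma>)\<in>{-1, 1 :: real} \<times> sign_vectors m. (s * a 0 + T \<sigma>)\<^sup>2)"
    unfolding sign_vectors_Suc
    by (subst sum.reindex) (simp_all del: sum.lessThan_Suc
        add: sum.lessThan_Suc_shift T_def case_prod_beta)
  also have "\<dots> = (\<Sum>\<sigma>\<in>sign_vectors m. 2 * (a 0)\<^sup>2 + 2 * (T \<sigma>)\<^sup>2)"
    \<comment> \<open>the cross terms \<open>\<plusminus>2 a\<^sub>0 T \<sigma>\<close> cancel\<close>
    by (simp add: sum.cartesian_product[symmetric] sum.distrib[symmetric]
        power2_eq_square algebra_simps)
  also have "\<dots> = 2 * real (card (sign_vectors m)) * (a 0)\<^sup>2
      + 2 * (\<Sum>\<sigma>\<in>sign_vectors m. (T \<sigma>)\<^sup>2)"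
    by (simp add: sum.distrib sum_distrib_left)
  also have "\<dots> = real (card (sign_vectors (Suc m))) * (\<Sum>i<Suc m. (a i)\<^sup>2)"
    using Suc.IH[of "a \<circ> Suc"]
    by (simp del: sum.lessThan_Suc
        add: T_def sum.lessThan_Suc_shift card_sign_vectors algebra_simps)
  finally show ?case .
qed

lemma sum_sign_vectors_L2_set_le:
  "(\<Sum>\<sigma>\<in>sign_vectors m. L2_set (\<lambda>f. \<Sum>i<m. \<sigma> ! i * a i f) F)
     \<le> real (card (sign_vectors m)) * sqrt (\<Sum>i<m. \<Sum>f\<in>F. (a i f)\<^sup>2)"
proof -
  define S where "S = sign_vectors m"
  define c where "c = real (card S)"
  define L where "L \<sigma> = L2_set (\<lambda>f. \<Sum>i<m. \<sigma> ! i * a i f) F" for \<sigma>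
  have "(\<Sum>\<sigma>\<in>S. (L \<sigma>)\<^sup>2) = (\<Sum>f\<in>F. \<Sum>\<sigma>\<in>S. (\<Sum>i<m. \<sigma> ! i * a i f)\<^sup>2)"
    by (simp add: L_def L2_set_def sum_nonneg) (rule sum.swap)
  also have "\<dots> = c * (\<Sum>i<m. \<Sum>f\<in>F. (a i f)\<^sup>2)"
    by (simp add: S_def c_def sum_sign_vectors_square sum_distrib_left) (rule sum.swap)
  finally have sum_L_square: "(\<Sum>\<sigma>\<in>S. (L \<sigma>)\<^sup>2) = c * (\<Sum>i<m. \<Sum>f\<in>F. (a i f)\<^sup>2)" .
  have "(\<Sum>\<sigma>\<in>S. L \<sigma>) \<le> L2_set (\<lambda>_. 1) S * L2_set L S"
    using L2_set_mult_ineq[of "\<lambda>_. 1" L S] by (simp add: L_def)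
  also have "\<dots> = sqrt c * sqrt (c * (\<Sum>i<m. \<Sum>f\<in>F. (a i f)\<^sup>2))"
    by (simp add: L2_set_constant L2_set_def sum_L_square c_def)
  also have "\<dots> = c * sqrt (\<Sum>i<m. \<Sum>f\<in>F. (a i f)\<^sup>2)"
    by (simp add: c_def real_sqrt_mult)
  finally show ?thesis
    by (simp add: S_def c_def L_def)
qed

lemma emp_rademacher_le_feature_bound:
  fixes H :: "('a \<Rightarrow> real) set" and \<phi> :: "'a \<Rightarrow> 'f \<Rightarrow> real"
  assumes "xs \<noteq> []" and "H \<noteq> {}" and "0 \<le> c"
    and bound: "\<And>h \<sigma>. h \<in> H \<Longrightarrow>
      (\<Sum>i<length xs. \<sigma> ! i * h (xs ! i)) \<le> c * L2_set (\<lambda>f. \<Sum>i<length xs. \<sigma> ! i * \<phi> (xs ! i) f) F"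
  shows "emp_rademacher H xs
           \<le> c * sqrt (\<Sum>i<length xs. \<Sum>f\<in>F. (\<phi> (xs ! i) f)\<^sup>2) / real (length xs)"
proof -
  define m where "m = length xs"
  define S where "S = sign_vectors m"
  have m_pos: "real m > 0" and card_pos: "real (card S) > 0"
    using assms(1) by (simp_all add: m_def S_def card_sign_vectors)
  have "(\<Sum>\<sigma>\<in>S. SUP h\<in>H. \<Sum>i<m. \<sigma> ! i * h (xs ! i))
      \<le> (\<Sum>\<sigma>\<in>S. c * L2_set (\<lambda>f. \<Sum>i<m. \<sigma> ! i * \<phi> (xs ! i) f) F)"
    by (intro sum_mono cSUP_least assms(2)) (simp add: bound m_def)
  also have "\<dots> \<le> c * (real (card S) * sqrt (\<Sum>i<m. \<Sum>f\<in>F. (\<phi> (xs ! i) f)\<^sup>2))"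
    unfolding sum_distrib_left[symmetric] S_def
    by (intro mult_left_mono sum_sign_vectors_L2_set_le assms(3))
  finally show ?thesis
    using m_pos card_pos
    by (simp add: emp_rademacher_def Let_def m_def[symmetric] S_def[symmetric] field_simps)
qed

lemma sum_kernel_class_le_L2_set:
  fixes X :: "(real^'n) set"
  assumes "h \<in> kernel_class k X" and "\<And>x. x \<in> X \<Longrightarrow> sqrt (poly_kernel k x x) \<le> \<kappa>"
  shows "(\<Sum>i<m. \<sigma> ! i * h (xs ! i))
           \<le> \<kappa> * L2_set (\<lambda>f. \<Sum>i<m. \<sigma> ! i * poly_feature k (xs ! i) f) (poly_feature_index k)"
proof -
  define F :: "(nat \<Rightarrow> 'n option) set" where "F = poly_feature_index k"
  define V where "V = (\<lambda>f. \<Sum>i<m. \<sigma> ! i * poly_feature k (xs ! i) f)"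
  obtain x' s where "x' \<in> X" and s: "s \<in> {-1, 1 :: real}"
    and h: "h = (\<lambda>x. s * poly_kernel k x x')"
    using assms(1) unfolding kernel_class_def by blast
  have "(\<Sum>i<m. \<sigma> ! i * h (xs ! i)) = s * (\<Sum>f\<in>F. V f * poly_feature k x' f)"
    by (simp add: h F_def V_def poly_kernel_eq_sum_poly_feature sum_distrib_left
        sum_distrib_right algebra_simps sum.swap[of _ "{..<m}"])
  also have "\<dots> \<le> (\<Sum>f\<in>F. \<bar>V f\<bar> * \<bar>poly_feature k x' f\<bar>)"
    using s by (auto simp: abs_mult[symmetric] intro: order_trans[OF _ sum_abs])
  also have "\<dots> \<le> L2_set V F * sqrt (poly_kernel k x' x')"
    using L2_set_mult_ineq[of V "poly_feature k x'" F] by (simp add: F_def L2_set_poly_feature)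
  also have "\<dots> \<le> L2_set V F * \<kappa>"
    by (intro mult_left_mono assms(2) \<open>x' \<in> X\<close> L2_set_nonneg)
  finally show ?thesis
    by (simp add: F_def V_def mult.commute)
qed

lemma emp_rademacher_kernel_class_le:
  assumes "bounded X" and "xs \<noteq> []" and "set xs \<subseteq> X"
  shows "emp_rademacher (kernel_class k X) xs \<le> (kernel_kappa k X)\<^sup>2 / sqrt (real (length xs))"
proof -
  define \<kappa> where "\<kappa> = kernel_kappa k X"
  define m where "m = length xs"
  have kappa_bound: "sqrt (poly_kernel k x x) \<le> \<kappa>" if "x \<in> X" for x
    unfolding \<kappa>_def using assms(1) that by (rule sqrt_poly_kernel_le_kernel_kappa)
  have xs_in_X: "xs ! i \<in> X" if "i < m" for i
    using that assms(3) by (auto simp: m_def)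
  have "X \<noteq> {}"
    using assms(2,3) by auto
  then obtain x where "x \<in> X"
    by blast
  then have "\<kappa> \<ge> 0"
    using kappa_bound real_sqrt_ge_zero[OF poly_kernel_self_nonneg] order_trans by blast
  have kernel_bound: "poly_kernel k (xs ! i) (xs ! i) \<le> \<kappa>\<^sup>2" if "i < m" for i
  proof -
    have "poly_kernel k (xs ! i) (xs ! i) = (sqrt (poly_kernel k (xs ! i) (xs ! i)))\<^sup>2"
      by (rule real_sqrt_pow2[OF poly_kernel_self_nonneg, symmetric])
    also have "\<dots> \<le> \<kappa>\<^sup>2"
      by (intro power_mono kappa_bound xs_in_X that) (simp add: poly_kernel_self_nonneg)
    finally show ?thesis .
  qed
  have "(\<Sum>i<m. \<Sum>f\<in>poly_feature_index k. (poly_feature k (xs ! i) f)\<^sup>2)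
      = (\<Sum>i<m. poly_kernel k (xs ! i) (xs ! i))"
    by (simp add: poly_kernel_eq_sum_poly_feature power2_eq_square)
  also have "\<dots> \<le> real m * \<kappa>\<^sup>2"
    using sum_mono[of "{..<m}", OF kernel_bound] by simp
  finally have sum_features_le:
    "(\<Sum>i<m. \<Sum>f\<in>poly_feature_index k. (poly_feature k (xs ! i) f)\<^sup>2) \<le> real m * \<kappa>\<^sup>2" .
  have class_nonempty: "kernel_class k X \<noteq> {}"
    using \<open>X \<noteq> {}\<close> by (auto simp: kernel_class_def)
  have "emp_rademacher (kernel_class k X) xs
      \<le> \<kappa> * sqrt (\<Sum>i<m. \<Sum>f\<in>poly_feature_index k. (poly_feature k (xs ! i) f)\<^sup>2) / real m"
    unfolding m_def using assms(2) class_nonempty \<open>\<kappa> \<ge> 0\<close>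
    by (rule emp_rademacher_le_feature_bound) (rule sum_kernel_class_le_L2_set[OF _ kappa_bound])
  also have "\<dots> \<le> \<kappa> * sqrt (real m * \<kappa>\<^sup>2) / real m"
    using sum_features_le \<open>\<kappa> \<ge> 0\<close>
    by (intro divide_right_mono mult_left_mono real_sqrt_le_mono) auto
  also have "\<kappa> * sqrt (real m * \<kappa>\<^sup>2) / real m = \<kappa>\<^sup>2 / sqrt (real m)"
    using assms(2) \<open>\<kappa> \<ge> 0\<close>
    by (simp add: m_def real_sqrt_mult field_simps power2_eq_square real_sqrt_divide)
  finally show ?thesis
    by (simp add: \<kappa>_def m_def)
qed

theorem lemma2:
  fixes X :: "(real^'n) set" and k :: nat and xs :: "(real^'n) list"
  assumes "bounded X"
    and "xs \<noteq> []"
    and "set xs \<subseteq> X"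
  shows "emp_rademacher (kernel_class k X) xs
           \<le> 12 * (kernel_kappa k X)\<^sup>2
              * sqrt (pi * real ((CARD('n) + k) choose k) / real (length xs))"
proof -
  define d where "d = real ((CARD('n) + k) choose k)"
  have "1 \<le> d"
    by (simp add: d_def Suc_leI)
  then have "pi * 1 \<le> pi * d"
    by (intro mult_left_mono) auto
  then have "1 \<le> pi * d"
    using pi_gt3 by linarith
  then have "1 \<le> sqrt (pi * d)"
    by simp
  then have "1 \<le> 12 * sqrt (pi * d)"
    by linarith
  then have bound: "1 / sqrt (real (length xs)) \<le> 12 * sqrt (pi * d / real (length xs))"
    by (simp add: real_sqrt_divide divide_right_mono)
  have "emp_rademacher (kernel_class k X) xs \<le> (kernel_kappa k X)\<^sup>2 * (1 / sqrt (real (length xs)))"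
    using emp_rademacher_kernel_class_le[OF assms] by simp
  also have "\<dots> \<le> (kernel_kappa k X)\<^sup>2 * (12 * sqrt (pi * d / real (length xs)))"
    using bound by (rule mult_left_mono) simp
  finally show ?thesis
    by (simp add: d_def mult_ac)
qed

end
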